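(* Let $\Bbbk$ be a field of characteristic zero, let $n \geq 3$, $d \geq 2$, and $S=\Bbbk[x_1,\ldots,x_n]$. Let $$\beta(n,d) =\binom{n+d-1}{d}-\begin{cases} 3(d-1) & \text{if } n=3 \text{ and } d\geq 3 \text{ is odd,} \\ 3(d-1)+1 & \text{if } n=3 \text{ and } d\geq 2 \text{ is even,} \\ 2d & \text{if } n\geq 4. \end{cases}$$ Then for every integer $\mu\in \left[\mathrm{HF}(S,d)-\mathrm{HF}(S,d-1), \beta(n,d) \right]$ there exists an artinian monomial ideal $I$ minimally generated by $\mu$ elements of degree $d$ such that $S/I$ fails the WLP by surjectivity in degree $d-1$. Moreover, this interval is non-empty except for the case $n=3$, $d= 2$.
   Context: $\mathrm{HF}(A,k)=\dim_\Bbbk A_k$. For a monomial ideal $I$, $A=S/I$ fails the WLP in degree $i$ if $\times(x_1+\cdots+x_n): A_i\to A_{i+1}$ does not have maximal rank; it fails the WLP by surjectivity in degree $i$ if in addition $\mathrm{HF}(A,i)\ge \mathrm{HF}(A,i+1)$. *)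

theory Defs
  imports Main
begin

text \<open>Monomials of S = k[x_1,...,x_n] are exponent vectors (variables indexed 0..n-1),
  with exponents 0 outside {0..<n}. Divisibility of monomials is pointwise order.\<close>

type_synonym monom = "nat \<Rightarrow> nat"

definition monoms :: "nat \<Rightarrow> nat \<Rightarrow> monom set" where
  "monoms n k = {m. (\<forall>i\<ge>n. m i = 0) \<and> (\<Sum>i<n. m i) = k}"

definition HF_S :: "nat \<Rightarrow> nat \<Rightarrow> nat" where
  "HF_S n k = card (monoms n k)"

text \<open>A monomial ideal I is given by a set G of monomial generators; a monomial
  lies in I iff some generator divides it.\<close>
definition in_mideal :: "monom set \<Rightarrow> monom \<Rightarrow> bool" where
  "in_mideal G m \<longleftrightarrow> (\<exists>g\<in>G. g \<le> m)"

text \<open>Standard monomials of degree k: a basis of (S/I)_k.\<close>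
definition std :: "nat \<Rightarrow> monom set \<Rightarrow> nat \<Rightarrow> monom set" where
  "std n G k = {m \<in> monoms n k. \<not> in_mideal G m}"

definition HF_A :: "nat \<Rightarrow> monom set \<Rightarrow> nat \<Rightarrow> nat" where
  "HF_A n G k = card (std n G k)"

definition minimal_gens :: "monom set \<Rightarrow> bool" where
  "minimal_gens G \<longleftrightarrow> (\<forall>g\<in>G. \<forall>h\<in>G. h \<le> g \<longrightarrow> h = g)"

definition artinian :: "nat \<Rightarrow> monom set \<Rightarrow> bool" where
  "artinian n G \<longleftrightarrow> (\<forall>i<n. \<exists>a. in_mideal G (\<lambda>j. if j = i then a else 0))"

text \<open>The graded piece (S/I)_k over the field 'k, as coefficient vectors on the
  standard monomial basis.\<close>
definition Apiece :: "'k::field itself \<Rightarrow> nat \<Rightarrow> monom set \<Rightarrow> nat \<Rightarrow> (monom \<Rightarrow> 'k) set" where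
  "Apiece _ n G k = {f. \<forall>m. m \<notin> std n G k \<longrightarrow> f m = 0}"

text \<open>Multiplication by x_1+...+x_n from (S/I)_k to (S/I)_{k+1}: the coefficient of a
  standard monomial m' in the product is the sum of the coefficients of m'/x_j.\<close>
definition mult_ell :: "nat \<Rightarrow> monom set \<Rightarrow> nat \<Rightarrow> (monom \<Rightarrow> 'k::field) \<Rightarrow> (monom \<Rightarrow> 'k)" where
  "mult_ell n G k f = (\<lambda>m'. if m' \<in> std n G (Suc k)
      then (\<Sum>j<n. if 0 < m' j then f (m'(j := m' j - 1)) else 0) else 0)"

definition maximal_rank :: "'k::field itself \<Rightarrow> nat \<Rightarrow> monom set \<Rightarrow> nat \<Rightarrow> bool" where
  "maximal_rank T n G k \<longleftrightarrow>
     inj_on (mult_ell n G k :: (monom \<Rightarrow> 'k) \<Rightarrow> _) (Apiece T n G k)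
     \<or> (mult_ell n G k) ` (Apiece T n G k) = Apiece T n G (Suc k)"

definition fails_WLP_surj :: "'k::field itself \<Rightarrow> nat \<Rightarrow> monom set \<Rightarrow> nat \<Rightarrow> bool" where
  "fails_WLP_surj T n G k \<longleftrightarrow> \<not> maximal_rank T n G k \<and> HF_A n G k \<ge> HF_A n G (Suc k)"

definition beta :: "nat \<Rightarrow> nat \<Rightarrow> int" where
  "beta n d = int ((n + d - 1) choose d) -
     (if n = 3 \<and> odd d then 3 * (int d - 1)
      else if n = 3 \<and> even d then 3 * (int d - 1) + 1
      else 2 * int d)"

end

theory Submission
  imports Defs "HOL-Library.Function_Algebras" "HOL.Vector_Spaces"
begin

text \<open>Let \<open>c\<close> be a linear form on \<open>S\<^sub>d\<close> that vanishes on \<open>\<ell> S\<^bsub>d-1\<^esub>\<close> and is supported on a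
  set \<open>M\<close> of non-pure monomials of degree \<open>d\<close>, and let \<open>I\<close> be generated by all other monomials
  of degree \<open>d\<close>. Then \<open>I\<close> is artinian, \<open>(S/I)\<^bsub>d-1\<^esub> = S\<^bsub>d-1\<^esub>\<close> and \<open>(S/I)\<^sub>d\<close> has basis \<open>M\<close>;
  \<open>c\<close> is a nonzero form on \<open>(S/I)\<^sub>d\<close> killing the image of \<open>\<times>\<ell>\<close>, so \<open>\<times>\<ell>\<close> is not surjective,
  and when \<open>|M| \<le> dim S\<^bsub>d-1\<^esub>\<close> it is not injective either. Explicit such forms with at most
  \<open>2d\<close> monomials (\<open>n \<ge> 4\<close>), resp. \<open>3(d-1)\<close> or \<open>3d-2\<close> monomials (\<open>n = 3\<close>), exist, and \<open>M\<close>
  may be any set of non-pure monomials between their support and size \<open>dim S\<^bsub>d-1\<^esub>\<close>;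
  this realises every \<open>\<mu> = dim S\<^sub>d - |M|\<close> in the stated range.\<close>

section \<open>Monomials of a fixed degree\<close>

lemma sum_fun_upd_lessThan:
  fixes u :: "nat \<Rightarrow> nat"
  assumes "j < n"
  shows "(\<Sum>i<n. (u(j := x)) i) + u j = (\<Sum>i<n. u i) + x"
  using assms by (simp add: sum.remove[of "{..<n}" j])

lemma bij_betw_shift_var:
  assumes "j < n"
  shows "bij_betw (\<lambda>u. u(j := u j + 1)) (monoms n k) {m \<in> monoms n (Suc k). 0 < m j}"
proof (rule bij_betw_byWitness[where f'="\<lambda>m. m(j := m j - 1)"])
  show "(\<lambda>u. u(j := u j + 1)) ` monoms n k \<subseteq> {m \<in> monoms n (Suc k). 0 < m j}"
  proof clarify
    fix u assume u: "u \<in> monoms n k"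
    then have "(\<Sum>i<n. (u(j := u j + 1)) i) = Suc k"
      using sum_fun_upd_lessThan[OF assms, of u "u j + 1"] by (simp add: monoms_def)
    then show "u(j := u j + 1) \<in> monoms n (Suc k) \<and> 0 < (u(j := u j + 1)) j"
      using u assms by (simp add: monoms_def)
  qed
  show "(\<lambda>m. m(j := m j - 1)) ` {m \<in> monoms n (Suc k). 0 < m j} \<subseteq> monoms n k"
  proof clarify
    fix m assume m: "m \<in> monoms n (Suc k)" "0 < m j"
    then have "(\<Sum>i<n. (m(j := m j - 1)) i) = k"
      using sum_fun_upd_lessThan[OF assms, of m "m j - 1"] by (simp add: monoms_def)
    then show "m(j := m j - 1) \<in> monoms n k"
      using m assms by (simp add: monoms_def)
  qed
next
  show "\<forall>u\<in>monoms n k. (u(j := u j + 1))(j := (u(j := u j + 1)) j - 1) = u" by simp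
  show "\<forall>m\<in>{m \<in> monoms n (Suc k). 0 < m j}. (m(j := m j - 1))(j := (m(j := m j - 1)) j + 1) = m"
    by auto
qed

lemma shift_var_in_monoms:
  "j < n \<Longrightarrow> u \<in> monoms n k \<Longrightarrow> u(j := u j + 1) \<in> monoms n (Suc k)"
  using bij_betw_imp_surj_on[OF bij_betw_shift_var] by blast

lemma monoms_Suc_Suc:
  "monoms (Suc n) (Suc k) = monoms n (Suc k) \<union> {m \<in> monoms (Suc n) (Suc k). 0 < m n}"
proof (rule set_eqI)
  fix m :: monom
  have "(\<forall>i\<ge>n. m i = 0) \<longleftrightarrow> m n = 0 \<and> (\<forall>i\<ge>Suc n. m i = 0)"
    by (auto simp: Suc_le_eq) (metis le_neq_implies_less)
  then show "m \<in> monoms (Suc n) (Suc k) \<longleftrightarrow> m \<in> monoms n (Suc k) \<union> {m \<in> monoms (Suc n) (Suc k). 0 < m n}"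
    by (auto simp: monoms_def)
qed

lemma monoms_0: "monoms n 0 = {\<lambda>_. 0}"
  unfolding monoms_def by (auto simp: fun_eq_iff) (meson lessThan_iff not_le)

lemma finite_card_monoms: "finite (monoms n d) \<and> card (monoms n d) = (n + d - 1) choose d"
proof (induction n arbitrary: d)
  case 0
  show ?case
    by (cases d) (simp_all add: monoms_0, simp add: monoms_def)
next
  case (Suc n)
  note IH_vars = Suc.IH
  show ?case
  proof (induction d)
    case 0
    show ?case
      by (simp add: monoms_0)
  next
    case (Suc k)
    let ?B = "{m \<in> monoms (Suc n) (Suc k). 0 < m n}"
    have "bij_betw (\<lambda>u. u(n := u n + 1)) (monoms (Suc n) k) ?B"
      by (rule bij_betw_shift_var) simp
    then have B: "finite ?B" "card ?B = n + k choose k"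
      using Suc.IH by (simp_all add: bij_betw_finite bij_betw_same_card[symmetric])
    have disjoint: "monoms n (Suc k) \<inter> ?B = {}"
      by (auto simp: monoms_def)
    have "card (monoms (Suc n) (Suc k)) = card (monoms n (Suc k) \<union> ?B)"
      using monoms_Suc_Suc by (rule arg_cong)
    also have "\<dots> = card (monoms n (Suc k)) + card ?B"
      using IH_vars[of "Suc k"] B(1) disjoint by (intro card_Un_disjoint) auto
    also have "\<dots> = Suc n + Suc k - 1 choose Suc k"
      using IH_vars[of "Suc k"] B(2) by simp
    finally have "card (monoms (Suc n) (Suc k)) = Suc n + Suc k - 1 choose Suc k" .
    moreover have "finite (monoms (Suc n) (Suc k))"
      using IH_vars[of "Suc k"] B(1) by (subst monoms_Suc_Suc) simp
    ultimately show ?case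
      by blast
  qed
qed

lemma finite_monoms [simp]: "finite (monoms n d)"
  using finite_card_monoms by blast

lemma HF_S_eq_binomial: "HF_S n d = (n + d - 1) choose d"
  using finite_card_monoms by (simp add: HF_S_def)

lemma le_monoms_imp_eq:
  assumes "g \<in> monoms n d" "m \<in> monoms n d" "g \<le> m"
  shows "g = m"
proof (rule ccontr)
  assume "g \<noteq> m"
  then obtain i where "g i < m i"
    using assms(3) by (metis le_funD le_funI order_less_le antisym)
  moreover have "i < n"
  proof (rule ccontr)
    assume "\<not> i < n"
    then have "g i = 0" "m i = 0"
      using assms(1,2) by (simp_all add: monoms_def)
    then show False
      using \<open>g i < m i\<close> by simp
  qed
  ultimately have "(\<Sum>i<n. g i) < (\<Sum>i<n. m i)"
    using assms(3) by (intro sum_strict_mono_ex1) (auto simp: le_fun_def)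
  then show False
    using assms(1,2) by (simp add: monoms_def)
qed

lemma le_monoms_imp_degree_le:
  assumes "g \<in> monoms n d" "m \<in> monoms n k" "g \<le> m"
  shows "d \<le> k"
proof -
  have "(\<Sum>i<n. g i) \<le> (\<Sum>i<n. m i)"
    using assms(3) by (intro sum_mono) (simp add: le_fun_def)
  then show ?thesis
    using assms(1,2) by (simp add: monoms_def)
qed

section \<open>Linear algebra in coefficient spaces\<close>

global_interpretation pointwise: vector_space "\<lambda>(a::'k::field) (f::'b \<Rightarrow> 'k) x. a * f x"
  by unfold_locales (auto simp: fun_eq_iff algebra_simps)

lemma sum_fun_apply: "(sum f A) x = (\<Sum>a\<in>A. f a x)"
  by (induction A rule: infinite_finite_induct) auto

lemma hyperplane_in_span:
  fixes c f :: "'b \<Rightarrow> 'k::field"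
  assumes M: "finite M" "m0 \<in> M" "c m0 \<noteq> 0"
    and f: "\<And>m. m \<notin> M \<Longrightarrow> f m = 0" "(\<Sum>m\<in>M. c m * f m) = 0"
  shows "f \<in> pointwise.span
    ((\<lambda>m x. (if x = m then 1 else 0) - c m / c m0 * (if x = m0 then 1 else 0)) ` (M - {m0}))"
    (is "_ \<in> pointwise.span (?e ` _)")
proof -
  have f_m0: "f m0 = - (\<Sum>m\<in>M - {m0}. c m * f m) / c m0"
    using f(2) M by (simp add: sum.remove field_simps eq_neg_iff_add_eq_0)
  have "f = (\<Sum>m\<in>M - {m0}. (\<lambda>x. f m * ?e m x))"
  proof
    fix x
    show "f x = (\<Sum>m\<in>M - {m0}. (\<lambda>x. f m * ?e m x)) x"
    proof (cases "x = m0")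
      case True
      then have "(\<Sum>m\<in>M - {m0}. (\<lambda>x. f m * ?e m x)) x = (\<Sum>m\<in>M - {m0}. - (c m * f m) / c m0)"
        unfolding sum_fun_apply using M(3) by (intro sum.cong) (auto simp: field_simps)
      also have "\<dots> = f m0"
        using f_m0 by (simp add: sum_negf sum_divide_distrib)
      finally show ?thesis
        using True by simp
    next
      case False
      then have "(\<Sum>m\<in>M - {m0}. (\<lambda>x. f m * ?e m x)) x = (\<Sum>m\<in>M - {m0}. if x = m then f m else 0)"
        unfolding sum_fun_apply by (intro sum.cong) auto
      also have "\<dots> = f x"
        using M(1) f(1)[of x] False by auto
      finally show ?thesis
        by simp
    qed
  qed
  also have "\<dots> \<in> pointwise.span (?e ` (M - {m0}))"
    by (intro pointwise.span_sum pointwise.span_scale pointwise.span_base imageI)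
  finally show ?thesis .
qed

definition independent_family :: "'a set \<Rightarrow> ('a \<Rightarrow> 'b \<Rightarrow> 'k::field) \<Rightarrow> bool" where
  "independent_family U w \<longleftrightarrow> (\<forall>a. (\<forall>m. (\<Sum>u\<in>U. a u * w u m) = 0) \<longrightarrow> (\<forall>u\<in>U. a u = 0))"

lemma inj_on_if_independent_family:
  fixes w :: "'a \<Rightarrow> 'b \<Rightarrow> 'k::field"
  assumes "finite U" and indep: "independent_family U w"
  shows "inj_on w U"
proof (rule inj_onI, rule ccontr)
  fix u u' assume u: "u \<in> U" "u' \<in> U" "w u = w u'" "u \<noteq> u'"
  let ?a = "\<lambda>v. if v = u then 1 else if v = u' then - 1 else 0 :: 'k"
  have "(\<Sum>v\<in>U. ?a v * w v m)
      = (\<Sum>v\<in>U. (if v = u then w u m else 0) - (if v = u' then w u' m else 0))" for m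
    using u(4) by (intro sum.cong) auto
  then have "\<forall>m. (\<Sum>v\<in>U. ?a v * w v m) = 0"
    using u \<open>finite U\<close> by (simp add: sum_subtractf)
  moreover have "(\<forall>m. (\<Sum>v\<in>U. ?a v * w v m) = 0) \<longrightarrow> (\<forall>v\<in>U. ?a v = 0)"
    using indep unfolding independent_family_def by (elim allE[of _ ?a])
  ultimately show False
    using u(1) by auto
qed

lemma independent_image_if_independent_family:
  fixes w :: "'a \<Rightarrow> 'b \<Rightarrow> 'k::field"
  assumes "finite U" and indep: "independent_family U w"
  shows "pointwise.independent (w ` U)"
  unfolding pointwise.independent_explicit_finite_subsets
proof (intro allI impI ballI)
  fix S b v
  assume S: "S \<subseteq> w ` U" and v: "v \<in> S" and comb: "(\<Sum>v\<in>S. (\<lambda>x. b v * v x)) = 0"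
  let ?a = "\<lambda>u. if w u \<in> S then b (w u) else 0"
  have "(\<Sum>u\<in>U. ?a u * w u m) = 0" for m
  proof -
    have "(\<Sum>u\<in>U. ?a u * w u m) = (\<Sum>u\<in>U \<inter> w -` S. b (w u) * w u m)"
      using \<open>finite U\<close> by (intro sum.mono_neutral_cong_right) auto
    also have "\<dots> = (\<Sum>v\<in>S. b v * v m)"
      using S inj_on_subset[OF inj_on_if_independent_family[OF assms], of "U \<inter> w -` S"]
      by (intro sum.reindex_cong[symmetric]) auto
    also have "\<dots> = 0"
      using fun_cong[OF comb, of m] by (simp add: sum_fun_apply)
    finally show ?thesis .
  qed
  moreover have "(\<forall>m. (\<Sum>u\<in>U. ?a u * w u m) = 0) \<longrightarrow> (\<forall>u\<in>U. ?a u = 0)"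
    using indep unfolding independent_family_def by (elim allE[of _ ?a])
  moreover obtain u where "u \<in> U" "v = w u"
    using S v by blast
  ultimately have "?a u = 0"
    by blast
  then show "b v = 0"
    using \<open>v = w u\<close> v by simp
qed

lemma independent_family_in_hyperplane_card_less:
  fixes w :: "'a \<Rightarrow> 'b \<Rightarrow> 'k::field" and c :: "'b \<Rightarrow> 'k"
  assumes U: "finite U" "independent_family U w" and M: "finite M" "m0 \<in> M" "c m0 \<noteq> 0"
    and supp: "\<And>u m. u \<in> U \<Longrightarrow> m \<notin> M \<Longrightarrow> w u m = 0"
    and orth: "\<And>u. u \<in> U \<Longrightarrow> (\<Sum>m\<in>M. c m * w u m) = 0"
  shows "card U < card M"
proof -
  define T where
    "T = (\<lambda>m x. (if x = m then 1 else 0) - c m / c m0 * (if x = m0 then 1 else 0)) ` (M - {m0})"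
  have "w ` U \<subseteq> pointwise.span T"
  proof clarify
    fix u assume "u \<in> U"
    then show "w u \<in> pointwise.span T"
      unfolding T_def using supp orth by (intro hyperplane_in_span[where c = c, OF M]) auto
  qed
  moreover have "finite T"
    using M(1) by (simp add: T_def)
  ultimately have "card (w ` U) \<le> card T"
    using pointwise.independent_span_bound[OF _ independent_image_if_independent_family[OF U]]
    by blast
  also have "\<dots> \<le> card (M - {m0})"
    unfolding T_def by (rule card_image_le) (use M(1) in simp)
  also have "\<dots> < card M"
    using M(1,2) by (rule card_Diff1_less)
  finally show ?thesis
    using card_image[OF inj_on_if_independent_family[OF U]] by simp
qed

section \<open>Failure of the WLP forced by a form annihilated by \<ell>\<close>

text \<open>Read \<open>c\<close> as a linear form on \<open>S\<^bsub>k+1\<^esub>\<close>: it kills \<open>\<ell> u = \<Sum>\<^sub>j x\<^sub>j u\<close>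
  for every monomial \<open>u\<close> of degree \<open>k\<close>, i.e. it vanishes on the image of \<open>\<times>\<ell> : S\<^sub>k \<rightarrow> S\<^bsub>k+1\<^esub>\<close>.\<close>
definition vanishes_on_ell_multiples :: "nat \<Rightarrow> nat \<Rightarrow> (monom \<Rightarrow> 'k::field) \<Rightarrow> bool" where
  "vanishes_on_ell_multiples n k c \<longleftrightarrow> (\<forall>u\<in>monoms n k. (\<Sum>j<n. c (u(j := u j + 1))) = 0)"

lemma finite_std [simp]: "finite (std n G k)"
  by (simp add: std_def)

lemma sum_mult_ell_eq_0:
  fixes c f :: "monom \<Rightarrow> 'k::field"
  assumes c: "vanishes_on_ell_multiples n k c"
    and c_supp: "\<And>m. c m \<noteq> 0 \<Longrightarrow> m \<in> std n G (Suc k)"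
    and f_supp: "\<And>v. v \<notin> monoms n k \<Longrightarrow> f v = 0"
  shows "(\<Sum>m\<in>std n G (Suc k). c m * mult_ell n G k f m) = 0"
proof -
  let ?g = "\<lambda>m j. if 0 < m j then f (m(j := m j - 1)) else 0"
  have "(\<Sum>m\<in>std n G (Suc k). c m * mult_ell n G k f m)
      = (\<Sum>m\<in>monoms n (Suc k). c m * (\<Sum>j<n. ?g m j))"
    using c_supp by (intro sum.mono_neutral_cong_left) (auto simp: std_def mult_ell_def)
  also have "\<dots> = (\<Sum>j<n. \<Sum>m\<in>monoms n (Suc k). c m * ?g m j)"
    by (simp add: sum_distrib_left sum.swap[of _ "monoms n (Suc k)"])
  also have "\<dots> = (\<Sum>j<n. \<Sum>u\<in>monoms n k. c (u(j := u j + 1)) * f u)"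
  proof (rule sum.cong[OF refl])
    fix j assume "j \<in> {..<n}"
    then have bij: "bij_betw (\<lambda>u. u(j := u j + 1)) (monoms n k) {m \<in> monoms n (Suc k). 0 < m j}"
      by (intro bij_betw_shift_var) simp
    have "(\<Sum>m\<in>monoms n (Suc k). c m * ?g m j)
        = (\<Sum>m\<in>{m \<in> monoms n (Suc k). 0 < m j}. c m * f (m(j := m j - 1)))"
      by (rule sum.mono_neutral_cong_right) auto
    also have "\<dots> = (\<Sum>u\<in>monoms n k. c (u(j := u j + 1)) * f u)"
      by (subst sum.reindex_bij_betw[OF bij, symmetric]) simp
    finally show "(\<Sum>m\<in>monoms n (Suc k). c m * ?g m j) = (\<Sum>u\<in>monoms n k. c (u(j := u j + 1)) * f u)" .
  qed
  also have "\<dots> = (\<Sum>u\<in>monoms n k. f u * (\<Sum>j<n. c (u(j := u j + 1))))"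
    by (simp add: sum.swap[of _ "{..<n}"] sum_distrib_left mult.commute)
  also have "\<dots> = 0"
    using c by (simp add: vanishes_on_ell_multiples_def)
  finally show ?thesis .
qed

lemma mult_ell_linear:
  fixes a :: "monom \<Rightarrow> 'k::field"
  assumes "finite U"
  shows "mult_ell n G k (\<lambda>v. if v \<in> U then a v else 0) m
     = (\<Sum>u\<in>U. a u * mult_ell n G k (\<lambda>x. if x = u then 1 else 0) m)"
proof (cases "m \<in> std n G (Suc k)")
  case True
  have delta: "(\<Sum>u\<in>U. a u * (if x = u then 1 else 0)) = (if x \<in> U then a x else 0)" for x
  proof -
    have "(\<Sum>u\<in>U. a u * (if x = u then 1 else 0)) = (\<Sum>u\<in>U. if x = u then a u else 0)"
      by (rule sum.cong) auto
    then show ?thesis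
      using assms by simp
  qed
  have "(\<Sum>u\<in>U. a u * mult_ell n G k (\<lambda>x. if x = u then 1 else 0) m)
      = (\<Sum>j<n. \<Sum>u\<in>U. a u * (if 0 < m j then (if m(j := m j - 1) = u then 1 else 0) else 0))"
    using True by (simp add: mult_ell_def sum_distrib_left sum.swap[of _ U])
  also have "\<dots> = (\<Sum>j<n. if 0 < m j then (if m(j := m j - 1) \<in> U then a (m(j := m j - 1)) else 0) else 0)"
    by (intro sum.cong refl) (simp add: delta)
  finally show ?thesis
    using True by (simp add: mult_ell_def)
next
  case False
  then show ?thesis
    by (simp add: mult_ell_def)
qed

lemma mult_ell_not_surj:
  fixes c :: "monom \<Rightarrow> 'k::field"
  assumes c: "vanishes_on_ell_multiples n k c"
    and c_supp: "\<And>m. c m \<noteq> 0 \<Longrightarrow> m \<in> std n G (Suc k)" and "c m0 \<noteq> 0"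
  shows "mult_ell n G k ` Apiece TYPE('k) n G k \<noteq> Apiece TYPE('k) n G (Suc k)"
proof
  assume surj: "mult_ell n G k ` Apiece TYPE('k) n G k = Apiece TYPE('k) n G (Suc k)"
  have m0: "m0 \<in> std n G (Suc k)"
    using c_supp \<open>c m0 \<noteq> 0\<close> by blast
  then have "(\<lambda>x. if x = m0 then 1 else 0 :: 'k) \<in> Apiece TYPE('k) n G (Suc k)"
    by (simp add: Apiece_def)
  then have "(\<lambda>x. if x = m0 then 1 else 0 :: 'k) \<in> mult_ell n G k ` Apiece TYPE('k) n G k"
    unfolding surj .
  then obtain f where f_image: "(\<lambda>x. if x = m0 then 1 else 0) = mult_ell n G k f"
    and f: "f \<in> Apiece TYPE('k) n G k"
    by (rule imageE)
  have "(\<Sum>m\<in>std n G (Suc k). c m * mult_ell n G k f m) = 0"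
    using f by (intro sum_mult_ell_eq_0[OF c c_supp]) (auto simp: Apiece_def std_def)
  moreover have "(\<Sum>m\<in>std n G (Suc k). c m * mult_ell n G k f m)
      = (\<Sum>m\<in>std n G (Suc k). if m = m0 then c m else 0)"
    by (intro sum.cong) (simp_all flip: f_image)
  ultimately show False
    using m0 \<open>c m0 \<noteq> 0\<close> by simp
qed

lemma independent_family_if_mult_ell_inj:
  assumes inj: "inj_on (mult_ell n G k) (Apiece TYPE('k::field) n G k)"
  shows "independent_family (std n G k) (\<lambda>u. mult_ell n G k (\<lambda>x. if x = u then 1 else 0 :: 'k))"
  unfolding independent_family_def
proof (intro allI impI)
  fix a :: "monom \<Rightarrow> 'k"
  assume comb: "\<forall>m. (\<Sum>u\<in>std n G k. a u * mult_ell n G k (\<lambda>x. if x = u then 1 else 0) m) = 0"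
  let ?f = "\<lambda>v. if v \<in> std n G k then a v else 0"
  have "mult_ell n G k ?f m = 0" for m
    using comb by (simp only: mult_ell_linear[OF finite_std])
  moreover have "mult_ell n G k 0 m = 0" for m
    by (simp add: mult_ell_def zero_fun_def)
  ultimately have "mult_ell n G k ?f = mult_ell n G k 0"
    by (intro ext) simp
  moreover have "?f \<in> Apiece TYPE('k) n G k" "0 \<in> Apiece TYPE('k) n G k"
    by (auto simp: Apiece_def)
  ultimately have f_zero: "?f = 0"
    using inj by (blast dest: inj_onD)
  show "\<forall>u\<in>std n G k. a u = 0"
  proof
    fix u assume "u \<in> std n G k"
    then show "a u = 0"
      using fun_cong[OF f_zero, of u] by simp
  qed
qed

lemma mult_ell_not_inj:
  fixes c :: "monom \<Rightarrow> 'k::field"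
  assumes c: "vanishes_on_ell_multiples n k c"
    and c_supp: "\<And>m. c m \<noteq> 0 \<Longrightarrow> m \<in> std n G (Suc k)" and "c m0 \<noteq> 0"
    and HF: "HF_A n G (Suc k) \<le> HF_A n G k"
  shows "\<not> inj_on (mult_ell n G k) (Apiece TYPE('k) n G k)"
proof
  assume inj: "inj_on (mult_ell n G k) (Apiece TYPE('k) n G k)"
  let ?w = "\<lambda>u. mult_ell n G k (\<lambda>x. if x = u then 1 else 0 :: 'k)"
  have "card (std n G k) < card (std n G (Suc k))"
  proof (rule independent_family_in_hyperplane_card_less[where w = ?w and c = c])
    show "independent_family (std n G k) ?w"
      using inj by (rule independent_family_if_mult_ell_inj)
    show "m0 \<in> std n G (Suc k)"
      using c_supp \<open>c m0 \<noteq> 0\<close> by blast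
    show "?w u m = 0" if "m \<notin> std n G (Suc k)" for u m
      using that by (simp add: mult_ell_def)
    show "(\<Sum>m\<in>std n G (Suc k). c m * ?w u m) = 0" if "u \<in> std n G k" for u
      using that by (intro sum_mult_ell_eq_0[OF c c_supp]) (auto simp: std_def)
  qed (simp_all add: \<open>c m0 \<noteq> 0\<close>)
  then show False
    using HF by (simp add: HF_A_def)
qed

lemma fails_WLP_surj_if_vanishing_form:
  fixes c :: "monom \<Rightarrow> 'k::field"
  assumes "vanishes_on_ell_multiples n k c"
    and "\<And>m. c m \<noteq> 0 \<Longrightarrow> m \<in> std n G (Suc k)" and "c m0 \<noteq> 0"
    and "HF_A n G (Suc k) \<le> HF_A n G k"
  shows "fails_WLP_surj TYPE('k) n G k"
proof -
  have "\<not> inj_on (mult_ell n G k) (Apiece TYPE('k) n G k)"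
    using assms by (rule mult_ell_not_inj[of n k c G m0])
  moreover have "mult_ell n G k ` Apiece TYPE('k) n G k \<noteq> Apiece TYPE('k) n G (Suc k)"
    using assms(1-3) by (rule mult_ell_not_surj[of n k c G m0])
  ultimately show ?thesis
    using assms(4) by (simp add: fails_WLP_surj_def maximal_rank_def)
qed

section \<open>Truncations of the degree-\<open>d\<close> monomials\<close>

lemma std_below_generator_degree:
  assumes "G \<subseteq> monoms n (Suc k)"
  shows "std n G k = monoms n k"
proof -
  have "\<not> in_mideal G m" if "m \<in> monoms n k" for m
  proof
    assume "in_mideal G m"
    then obtain g where "g \<in> G" "g \<le> m"
      by (auto simp: in_mideal_def)
    then have "Suc k \<le> k"
      using le_monoms_imp_degree_le[of g n "Suc k" m k] assms that by blast
    then show False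
      by simp
  qed
  then show ?thesis
    by (auto simp: std_def)
qed

lemma std_truncation:
  assumes "M \<subseteq> monoms n d"
  shows "std n (monoms n d - M) d = M"
proof -
  have "in_mideal (monoms n d - M) m \<longleftrightarrow> m \<notin> M" if "m \<in> monoms n d" for m
  proof
    assume "in_mideal (monoms n d - M) m"
    then obtain g where "g \<in> monoms n d - M" "g \<le> m"
      by (auto simp: in_mideal_def)
    then show "m \<notin> M"
      using le_monoms_imp_eq[of g n d m] that by auto
  next
    assume "m \<notin> M"
    then show "in_mideal (monoms n d - M) m"
      using that unfolding in_mideal_def by (blast intro: order_refl)
  qed
  then show ?thesis
    using assms by (auto simp: std_def)
qed

lemma minimal_gens_if_same_degree:
  assumes "G \<subseteq> monoms n d"
  shows "minimal_gens G"
  unfolding minimal_gens_def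
proof (intro ballI impI)
  fix g h assume "g \<in> G" "h \<in> G" "h \<le> g"
  then show "h = g"
    using assms le_monoms_imp_eq[of h n d g] by blast
qed

definition pure_power :: "nat \<Rightarrow> nat \<Rightarrow> monom" where
  "pure_power i a = (\<lambda>j. if j = i then a else 0)"

lemma pure_power_in_monoms: "i < n \<Longrightarrow> pure_power i d \<in> monoms n d"
  by (auto simp: monoms_def pure_power_def)

lemma artinian_if_pure_powers:
  assumes "\<And>i. i < n \<Longrightarrow> pure_power i d \<in> G"
  shows "artinian n G"
  unfolding artinian_def in_mideal_def
proof (intro allI impI)
  fix i assume "i < n"
  then have "pure_power i d \<in> G"
    by (rule assms)
  then show "\<exists>a. \<exists>g\<in>G. g \<le> (\<lambda>j. if j = i then a else 0)"
    unfolding pure_power_def by (blast intro: order_refl)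
qed

lemma shift_var_eq_pure_power:
  assumes pure: "u(j := u j + 1) = pure_power i (Suc k)"
  shows "u = pure_power j k"
proof -
  have "pure_power i (Suc k) j \<noteq> 0"
    unfolding pure[symmetric] by simp
  then have "i = j"
    by (simp add: pure_power_def split: if_splits)
  then show ?thesis
    using pure by (auto simp: fun_eq_iff pure_power_def split: if_splits)
qed

text \<open>Multiplication by \<open>x\<^bsub>n-1\<^esub>\<close> injects degree-\<open>k\<close> monomials into degree-\<open>(k+1)\<close>
  ones, and only \<open>x\<^bsub>n-1\<^esub>\<^sup>k\<close> is sent to a pure power; redirect it to \<open>x\<^sub>0\<^sup>k x\<^sub>1\<close>.\<close>
lemma HF_S_le_card_nonpure:
  assumes n: "n \<ge> 3" and k: "k \<ge> 1"
  shows "HF_S n k \<le> card {m \<in> monoms n (Suc k). \<forall>i<n. m \<noteq> pure_power i (Suc k)}"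
proof -
  define e :: monom where "e = (\<lambda>j. if j = 0 then k else if j = 1 then 1 else 0)"
  let ?shift = "\<lambda>u. u(n - 1 := u (n - 1) + 1)"
  define \<phi> where "\<phi> u = (if u = pure_power (n - 1) k then e else ?shift u)" for u
  have "(\<Sum>j<n. e j) = (\<Sum>j\<in>{0, 1}. e j)"
    using n by (intro sum.mono_neutral_right) (auto simp: e_def)
  then have e: "e \<in> monoms n (Suc k)" "\<forall>i<n. e \<noteq> pure_power i (Suc k)"
    using n k by (auto simp: monoms_def e_def pure_power_def fun_eq_iff)
  have e_not_shift: "e \<noteq> ?shift u" for u
  proof
    assume "e = ?shift u"
    then have "e (n - 1) = u (n - 1) + 1"
      by simp
    then show False
      using n by (auto simp: e_def split: if_splits)
  qed
  have "inj_on ?shift (monoms n k)"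
    using n bij_betw_imp_inj_on[OF bij_betw_shift_var] by simp
  then have "inj_on \<phi> (monoms n k)"
    using e_not_shift by (auto simp: inj_on_def \<phi>_def)
  moreover have "\<phi> u \<in> {m \<in> monoms n (Suc k). \<forall>i<n. m \<noteq> pure_power i (Suc k)}"
    if u: "u \<in> monoms n k" for u
    using e shift_var_in_monoms[OF _ u, of "n - 1"] shift_var_eq_pure_power[of u "n - 1"] n
    by (auto simp: \<phi>_def)
  ultimately show ?thesis
    unfolding HF_S_def by (intro card_inj_on_le) auto
qed

lemma exists_subset_between:
  assumes "finite B" "A \<subseteq> B" "card A \<le> s" "s \<le> card B"
  obtains M where "A \<subseteq> M" "M \<subseteq> B" "card M = s"
proof -
  have "finite A"
    using assms(1,2) by (rule finite_subset[rotated])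
  have "s - card A \<le> card (B - A)"
    using assms by (simp add: card_Diff_subset \<open>finite A\<close>)
  then obtain T where T: "T \<subseteq> B - A" "card T = s - card A" "finite T"
    by (meson obtain_subset_with_card_n)
  then have "card (A \<union> T) = s"
    using \<open>finite A\<close> assms(3) by (subst card_Un_disjoint) auto
  then show ?thesis
    using that[of "A \<union> T"] T(1) assms(2) by blast
qed

lemma exists_truncation_failing_WLP_surj:
  fixes c :: "monom \<Rightarrow> 'k::field"
  assumes n: "n \<ge> 3" and k: "k \<ge> 1"
    and c: "vanishes_on_ell_multiples n k c" and "c m0 \<noteq> 0"
    and c_supp: "\<And>m. c m \<noteq> 0 \<Longrightarrow> m \<in> monoms n (Suc k) \<and> (\<forall>i<n. m \<noteq> pure_power i (Suc k))"
    and s: "card {m. c m \<noteq> 0} \<le> s" "s \<le> HF_S n k"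
  shows "\<exists>G. G \<subseteq> monoms n (Suc k) \<and> finite G \<and> card G = HF_S n (Suc k) - s \<and> minimal_gens G
           \<and> artinian n G \<and> fails_WLP_surj TYPE('k) n G k"
proof -
  define B where "B = {m \<in> monoms n (Suc k). \<forall>i<n. m \<noteq> pure_power i (Suc k)}"
  have "finite B" "{m. c m \<noteq> 0} \<subseteq> B" "card {m. c m \<noteq> 0} \<le> s" "s \<le> card B"
    using c_supp s HF_S_le_card_nonpure[OF n k] by (auto simp: B_def)
  then obtain M where M: "{m. c m \<noteq> 0} \<subseteq> M" "M \<subseteq> B" "card M = s"
    by (rule exists_subset_between)
  then have "M \<subseteq> monoms n (Suc k)"
    by (auto simp: B_def)
  define G where "G = monoms n (Suc k) - M"
  have std: "std n G k = monoms n k" "std n G (Suc k) = M"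
    using std_truncation[OF \<open>M \<subseteq> monoms n (Suc k)\<close>] by (auto simp: G_def std_below_generator_degree)
  have "card G = HF_S n (Suc k) - s"
    using \<open>M \<subseteq> monoms n (Suc k)\<close> M(3) by (simp add: G_def HF_S_def card_Diff_subset finite_subset)
  moreover have "artinian n G"
    using M(2) by (intro artinian_if_pure_powers) (auto simp: G_def B_def pure_power_in_monoms)
  moreover have "fails_WLP_surj TYPE('k) n G k"
  proof (rule fails_WLP_surj_if_vanishing_form[of n k c G m0])
    show "m \<in> std n G (Suc k)" if "c m \<noteq> 0" for m
      using that std M(1) by auto
    show "HF_A n G (Suc k) \<le> HF_A n G k"
      using std M(3) s(2) by (simp add: HF_A_def HF_S_def)
  qed (use c \<open>c m0 \<noteq> 0\<close> in auto)
  moreover have "G \<subseteq> monoms n (Suc k)" "finite G"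
    by (simp_all add: G_def)
  moreover have "minimal_gens G"
    using \<open>G \<subseteq> monoms n (Suc k)\<close> by (rule minimal_gens_if_same_degree)
  ultimately show ?thesis
    by blast
qed

section \<open>Explicit forms annihilated by \<ell>\<close>

lemma sum_lessThan_3:
  fixes g :: "nat \<Rightarrow> 'a::comm_monoid_add"
  shows "(\<Sum>j<3. g j) = g 0 + g 1 + g 2"
  by (simp add: numeral_3_eq_3 numeral_2_eq_2 add.assoc)

lemma sum_lessThan_eq_first_four:
  fixes g :: "nat \<Rightarrow> 'a::comm_monoid_add"
  assumes "4 \<le> n" and "\<And>j. 4 \<le> j \<Longrightarrow> g j = 0"
  shows "(\<Sum>j<n. g j) = g 0 + g 1 + g 2 + g 3"
proof -
  have "(\<Sum>j<n. g j) = (\<Sum>j<4. g j)"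
    using assms by (intro sum.mono_neutral_right) auto
  then show ?thesis
    by (simp add: numeral_eq_Suc add.assoc)
qed

text \<open>The coefficients of the divided-power form \<open>(X\<^sub>0 - X\<^sub>1)(X\<^sub>2 - X\<^sub>3)\<^bsup>[k]\<^esup>\<close>;
  contraction by \<open>\<ell>\<close> kills both factors.\<close>
definition form4 :: "nat \<Rightarrow> monom \<Rightarrow> 'k::field" where
  "form4 k m = (if m 0 + m 1 = 1 \<and> m 2 + m 3 = k \<and> (\<forall>i\<ge>4. m i = 0) then (- 1) ^ (m 1 + m 3) else 0)"

lemma form4_vanishes_on_ell_multiples:
  assumes "n \<ge> 4"
  shows "vanishes_on_ell_multiples n k (form4 k :: monom \<Rightarrow> 'k::field)"
  unfolding vanishes_on_ell_multiples_def
proof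
  fix u :: monom
  have high: "(\<forall>i\<ge>4. (u(j := x)) i = 0) \<longleftrightarrow> (\<forall>i\<ge>4. u i = 0)" if "j < 4" for j x
    using that by auto
  have "\<not> (\<forall>i\<ge>4. (u(j := u j + 1)) i = 0)" if "4 \<le> j" for j
    using that by (metis add_is_0 fun_upd_same zero_neq_one)
  then have "(\<Sum>j<n. form4 k (u(j := u j + 1)) :: 'k)
      = form4 k (u(0 := u 0 + 1)) + form4 k (u(1 := u 1 + 1))
        + form4 k (u(2 := u 2 + 1)) + form4 k (u(3 := u 3 + 1))"
    using assms by (intro sum_lessThan_eq_first_four) (auto simp: form4_def)
  also have "\<dots> = 0"
    by (auto simp: form4_def high)
  finally show "(\<Sum>j<n. form4 k (u(j := u j + 1)) :: 'k) = 0" .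
qed

lemma form4_support:
  assumes "n \<ge> 4" and "k \<ge> 1" and "form4 k m \<noteq> (0 :: 'k::field)"
  shows "m \<in> monoms n (Suc k) \<and> (\<forall>i<n. m \<noteq> pure_power i (Suc k))"
proof -
  have m: "m 0 + m 1 = 1" "m 2 + m 3 = k" "\<forall>i\<ge>4. m i = 0"
    using assms(3) by (auto simp: form4_def split: if_splits)
  then have "(\<Sum>i<n. m i) = Suc k"
    using assms(1) by (subst sum_lessThan_eq_first_four) auto
  then have "m \<in> monoms n (Suc k)"
    using m(3) assms(1) by (simp add: monoms_def)
  moreover have "pure_power i (Suc k) 0 + pure_power i (Suc k) 1 \<noteq> 1" for i
    using assms(2) by (simp add: pure_power_def)
  ultimately show ?thesis
    using m(1) by metis
qed

lemma form4_nonzero: "form4 k (\<lambda>j. if j = 0 then 1 else if j = 3 then k else 0) \<noteq> (0 :: 'k::field)"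
  by (simp add: form4_def)

lemma card_form4_support: "card {m. form4 k m \<noteq> (0 :: 'k::field)} \<le> 2 * Suc k"
proof -
  define F :: "nat \<times> nat \<Rightarrow> monom" where
    "F = (\<lambda>(a, b) j. if j = 0 then 1 - a else if j = 1 then a
        else if j = 2 then b else if j = 3 then k - b else 0)"
  have "{m. form4 k m \<noteq> (0 :: 'k)} \<subseteq> F ` ({0, 1} \<times> {..k})"
  proof
    fix m assume "m \<in> {m. form4 k m \<noteq> (0 :: 'k)}"
    then have m: "m 0 + m 1 = 1" "m 2 + m 3 = k" "\<forall>i\<ge>4. m i = 0"
      by (auto simp: form4_def split: if_splits)
    then have "m = F (m 1, m 2)"
      by (auto simp: F_def fun_eq_iff)
    moreover have "(m 1, m 2) \<in> {0, 1} \<times> {..k}"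
      using m by auto
    ultimately show "m \<in> F ` ({0, 1} \<times> {..k})"
      by blast
  qed
  then have "card {m. form4 k m \<noteq> (0 :: 'k)} \<le> card (F ` ({0, 1} \<times> {..k}))"
    by (intro card_mono) auto
  also have "\<dots> \<le> card ({0 :: nat, 1} \<times> {..k})"
    by (rule card_image_le) auto
  finally show ?thesis
    by (simp add: card_cartesian_product)
qed

text \<open>The coefficient of \<open>X\<^sub>0\<^bsup>[a]\<^esup> X\<^sub>1\<^bsup>[b]\<^esup> X\<^sub>2\<^bsup>[e]\<^esup>\<close> in a divided-power form
  of \<open>X\<^sub>0\<close>-degree at most 2 that is killed by contraction with \<open>\<ell>\<close>. It vanishes for \<open>a = 0\<close>
  when \<open>b e = 0\<close> and for \<open>a = 1\<close> when \<open>b = e\<close>, which keeps its support down to \<open>3(d-1)\<close> or \<open>3d-2\<close>.\<close>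
definition form3_coeff :: "nat \<Rightarrow> nat \<Rightarrow> nat \<Rightarrow> int" where
  "form3_coeff a b e =
    (if a = 2 then 2 * (- 1) ^ e
     else if a = 1 then (- 1) ^ e * (int e - int b)
     else if a = 0 then - ((- 1) ^ e * int b * int e)
     else 0)"

lemma form3_coeff_ell_recurrence:
  "form3_coeff (Suc a) b e + form3_coeff a (Suc b) e + form3_coeff a b (Suc e) = 0"
proof -
  consider "a = 0" | "a = 1" | "a = 2" | "a \<ge> 3"
    by linarith
  then show ?thesis
    by cases (simp_all add: form3_coeff_def algebra_simps)
qed

definition monom3 :: "nat \<Rightarrow> nat \<Rightarrow> nat \<Rightarrow> monom" where
  "monom3 a b e = (\<lambda>j. if j = 0 then a else if j = 1 then b else if j = 2 then e else 0)"

lemma monoms_3_iff: "m \<in> monoms 3 d \<longleftrightarrow> m = monom3 (m 0) (m 1) (m 2) \<and> m 0 + m 1 + m 2 = d"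
proof -
  have "(\<forall>i\<ge>3. m i = 0) \<longleftrightarrow> m = monom3 (m 0) (m 1) (m 2)"
    by (auto simp: monom3_def fun_eq_iff numeral_3_eq_3 not_less_eq_eq[symmetric] less_Suc_eq)
  then show ?thesis
    by (simp add: monoms_def sum_lessThan_3)
qed

definition form3 :: "nat \<Rightarrow> monom \<Rightarrow> 'k::field" where
  "form3 k m = (if m \<in> monoms 3 (Suc k) then of_int (form3_coeff (m 0) (m 1) (m 2)) else 0)"

lemma form3_vanishes_on_ell_multiples:
  "vanishes_on_ell_multiples 3 k (form3 k :: monom \<Rightarrow> 'k::field)"
  unfolding vanishes_on_ell_multiples_def
proof
  fix u assume u: "u \<in> monoms 3 k"
  have "u(j := u j + 1) \<in> monoms 3 (Suc k)" if "j < 3" for j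
    using shift_var_in_monoms[OF that u] .
  then have "(\<Sum>j<3. form3 k (u(j := u j + 1)) :: 'k)
      = of_int (form3_coeff (Suc (u 0)) (u 1) (u 2) + form3_coeff (u 0) (Suc (u 1)) (u 2)
          + form3_coeff (u 0) (u 1) (Suc (u 2)))"
    by (simp add: sum_lessThan_3 form3_def)
  then show "(\<Sum>j<3. form3 k (u(j := u j + 1)) :: 'k) = 0"
    by (simp only: form3_coeff_ell_recurrence of_int_0)
qed

lemma form3_support:
  assumes "k \<ge> 2" and "form3 k m \<noteq> (0 :: 'k::field)"
  shows "m \<in> monoms 3 (Suc k) \<and> (\<forall>i<3. m \<noteq> pure_power i (Suc k))"
proof -
  have m: "m \<in> monoms 3 (Suc k)" "form3_coeff (m 0) (m 1) (m 2) \<noteq> 0"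
    using assms(2) by (auto simp: form3_def split: if_splits)
  have "form3_coeff (p 0) (p 1) (p 2) = 0" if "p = pure_power i (Suc k)" "i < 3" for p i
    using that assms(1) by (auto simp: less_Suc_eq numeral_3_eq_3 pure_power_def form3_coeff_def)
  then show ?thesis
    using m by blast
qed

lemma form3_nonzero:
  "k \<ge> 1 \<Longrightarrow> form3 k (monom3 2 (k - 1) 0) \<noteq> (0 :: 'k::field_char_0)"
  by (simp add: form3_def monoms_3_iff monom3_def form3_coeff_def)

lemma form3_support_subset:
  "{m. form3 k m \<noteq> (0 :: 'k::field)} \<subseteq> (\<lambda>b. monom3 2 b (k - 1 - b)) ` {..k - 1}
     \<union> (\<lambda>b. monom3 1 b (k - b)) ` {b. b \<le> k \<and> 2 * b \<noteq> k} \<union> (\<lambda>b. monom3 0 b (Suc k - b)) ` {1..k}"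
proof
  fix m assume "m \<in> {m. form3 k m \<noteq> (0 :: 'k)}"
  then have mem: "m \<in> monoms 3 (Suc k)" and coeff: "form3_coeff (m 0) (m 1) (m 2) \<noteq> 0"
    by (auto simp: form3_def split: if_splits)
  from mem have monom3: "m = monom3 (m 0) (m 1) (m 2) \<and> m 0 + m 1 + m 2 = Suc k"
    unfolding monoms_3_iff .
  obtain a b e where m: "m = monom3 a b e" and deg: "a + b + e = Suc k"
    and "form3_coeff a b e \<noteq> 0"
  proof (rule that)
    show "m = monom3 (m 0) (m 1) (m 2)"
      using monom3 by (rule conjunct1)
    show "m 0 + m 1 + m 2 = Suc k"
      using monom3 by (rule conjunct2)
  qed (rule coeff)
  then consider "a = 2" | "a = 1" "b \<noteq> e" | "a = 0" "b \<noteq> 0" "e \<noteq> 0"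
    by (auto simp: form3_coeff_def split: if_splits)
  then show "m \<in> (\<lambda>b. monom3 2 b (k - 1 - b)) ` {..k - 1}
     \<union> (\<lambda>b. monom3 1 b (k - b)) ` {b. b \<le> k \<and> 2 * b \<noteq> k} \<union> (\<lambda>b. monom3 0 b (Suc k - b)) ` {1..k}"
  proof cases
    case 1
    then show ?thesis
      unfolding m using deg by (intro UnI1 image_eqI[of _ _ b]) auto
  next
    case 2
    then show ?thesis
      unfolding m using deg by (intro UnI1 UnI2 image_eqI[of _ _ b]) auto
  next
    case 3
    then have "e = Suc k - b"
      using deg by simp
    then show ?thesis
      unfolding m using 3 deg by (intro UnI2 image_eqI[of _ _ b]) auto
  qed
qed

lemma card_non_half: "card {b. b \<le> k \<and> 2 * b \<noteq> k} = (if even k then k else Suc k)"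
proof (cases "even k")
  case True
  then have "{b. b \<le> k \<and> 2 * b \<noteq> k} = {..k} - {k div 2}"
    by auto
  then show ?thesis
    using True by simp
next
  case False
  then have "{b. b \<le> k \<and> 2 * b \<noteq> k} = {..k}"
    by auto
  then show ?thesis
    using False by simp
qed

lemma card_form3_support:
  assumes "k \<ge> 1"
  shows "card {m. form3 k m \<noteq> (0 :: 'k::field)} \<le> (if even k then 3 * k else 3 * k + 1)"
proof -
  let ?A2 = "(\<lambda>b. monom3 2 b (k - 1 - b)) ` {..k - 1}"
  let ?A1 = "(\<lambda>b. monom3 1 b (k - b)) ` {b. b \<le> k \<and> 2 * b \<noteq> k}"
  let ?A0 = "(\<lambda>b. monom3 0 b (Suc k - b)) ` {1..k}"
  have "card {m. form3 k m \<noteq> (0 :: 'k)} \<le> card (?A2 \<union> ?A1 \<union> ?A0)"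
    using form3_support_subset by (rule card_mono[rotated]) simp
  also have "\<dots> \<le> card ?A2 + card ?A1 + card ?A0"
    using card_Un_le[of "?A2 \<union> ?A1" ?A0] card_Un_le[of ?A2 ?A1] by linarith
  also have "\<dots> \<le> k + (if even k then k else Suc k) + k"
    using assms card_non_half[of k] by (intro add_mono card_image_le[THEN order_trans]) auto
  finally show ?thesis
    by (simp split: if_splits)
qed

section \<open>The numerical range\<close>

definition beta_offset :: "nat \<Rightarrow> nat \<Rightarrow> nat" where
  "beta_offset n d = (if n = 3 \<and> odd d then 3 * (d - 1) else if n = 3 then 3 * d - 2 else 2 * d)"

lemma beta_eq_HF_S_minus_offset:
  "d \<ge> 2 \<Longrightarrow> beta n d = int (HF_S n d) - int (beta_offset n d)"
  by (auto simp: beta_def beta_offset_def HF_S_eq_binomial of_nat_diff)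

lemma HF_S_le_HF_S_Suc:
  assumes "n \<ge> 3" and "k \<ge> 1"
  shows "HF_S n k \<le> HF_S n (Suc k)"
proof -
  have "HF_S n k \<le> card {m \<in> monoms n (Suc k). \<forall>i<n. m \<noteq> pure_power i (Suc k)}"
    by (rule HF_S_le_card_nonpure[OF assms])
  also have "\<dots> \<le> HF_S n (Suc k)"
    unfolding HF_S_def by (intro card_mono) auto
  finally show ?thesis .
qed

lemma HF_S_3: "HF_S 3 k = (k + 2) * (k + 1) div 2"
proof -
  have "HF_S 3 k = (k + 2) choose 2"
    using binomial_symmetric[of k "k + 2"] by (simp add: HF_S_eq_binomial)
  then show ?thesis
    by (simp add: choose_two)
qed

lemma HF_S_3_ge:
  assumes "k \<ge> 3"
  shows "3 * k + 1 \<le> HF_S 3 k"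
proof -
  have "3 * k \<le> k * k"
    using assms by (rule mult_le_mono1)
  then have "2 * (3 * k + 1) \<le> (k + 2) * (k + 1)"
    by (simp add: algebra_simps)
  then have "2 * (3 * k + 1) div 2 \<le> (k + 2) * (k + 1) div 2"
    by (rule div_le_mono)
  then show ?thesis
    unfolding HF_S_3 by simp
qed

lemma HF_S_ge_twice_Suc:
  assumes n: "n \<ge> 4" and k: "k \<ge> 1"
  shows "2 * Suc k \<le> HF_S n k"
proof (cases "k = 1")
  case True
  then show ?thesis
    using n by (simp add: HF_S_eq_binomial)
next
  case False
  have "4 * (k + 1) \<le> (k + 2) * (k + 1)"
    using False k by (intro mult_le_mono1) simp
  then have "4 * (k + 1) div 2 \<le> (k + 2) * (k + 1) div 2"
    by (rule div_le_mono)
  then have "2 * Suc k \<le> HF_S 3 k"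
    unfolding HF_S_3 by simp
  also have "\<dots> \<le> HF_S n k"
    using n by (simp add: HF_S_eq_binomial binomial_right_mono)
  finally show ?thesis .
qed

lemma beta_offset_le_iff:
  assumes n: "n \<ge> 3" and k: "k \<ge> 1"
  shows "beta_offset n (Suc k) \<le> HF_S n k \<longleftrightarrow> \<not> (n = 3 \<and> k = 1)"
proof (cases "n = 3")
  case True
  consider "k = 1" | "k = 2" | "k \<ge> 3"
    using k by linarith
  then show ?thesis
    using True HF_S_3_ge[of k] by cases (auto simp: beta_offset_def HF_S_3)
next
  case False
  then show ?thesis
    using HF_S_ge_twice_Suc[OF _ k, of n] n by (simp add: beta_offset_def)
qed

lemma exists_vanishing_form:
  assumes n: "n \<ge> 3" and k: "k \<ge> 1" and "\<not> (n = 3 \<and> k = 1)"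
  obtains c :: "monom \<Rightarrow> 'k::field_char_0" and m0
  where "vanishes_on_ell_multiples n k c" and "c m0 \<noteq> 0"
    and "\<And>m. c m \<noteq> 0 \<Longrightarrow> m \<in> monoms n (Suc k) \<and> (\<forall>i<n. m \<noteq> pure_power i (Suc k))"
    and "card {m. c m \<noteq> 0} \<le> beta_offset n (Suc k)"
proof (cases "n = 3")
  case True
  with assms have "k \<ge> 2"
    by auto
  show ?thesis
  proof (rule that[of "form3 k" "monom3 2 (k - 1) 0"])
    show "vanishes_on_ell_multiples n k (form3 k :: monom \<Rightarrow> 'k)"
      using True form3_vanishes_on_ell_multiples by simp
    show "form3 k (monom3 2 (k - 1) 0) \<noteq> (0 :: 'k)"
      using k by (rule form3_nonzero)
    show "m \<in> monoms n (Suc k) \<and> (\<forall>i<n. m \<noteq> pure_power i (Suc k))"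
      if "form3 k m \<noteq> (0 :: 'k)" for m
      using form3_support[OF \<open>k \<ge> 2\<close> that] True by simp
    show "card {m. form3 k m \<noteq> (0 :: 'k)} \<le> beta_offset n (Suc k)"
      using card_form3_support[OF k] True by (simp add: beta_offset_def split: if_splits)
  qed
next
  case False
  with n have "n \<ge> 4"
    by simp
  show ?thesis
  proof (rule that[of "form4 k" "\<lambda>j. if j = 0 then 1 else if j = 3 then k else 0"])
    show "vanishes_on_ell_multiples n k (form4 k :: monom \<Rightarrow> 'k)"
      using \<open>n \<ge> 4\<close> by (rule form4_vanishes_on_ell_multiples)
    show "form4 k (\<lambda>j. if j = 0 then 1 else if j = 3 then k else 0) \<noteq> (0 :: 'k)"
      by (rule form4_nonzero)
    show "m \<in> monoms n (Suc k) \<and> (\<forall>i<n. m \<noteq> pure_power i (Suc k))"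
      if "form4 k m \<noteq> (0 :: 'k)" for m
      using \<open>n \<ge> 4\<close> k that by (rule form4_support)
    show "card {m. form4 k m \<noteq> (0 :: 'k)} \<le> beta_offset n (Suc k)"
      using card_form4_support[of k] False by (simp add: beta_offset_def)
  qed
qed

lemma exists_ideal_failing_WLP_surj:
  fixes \<mu> :: int
  assumes n: "n \<ge> 3" and k: "k \<ge> 1"
    and \<mu>: "int (HF_S n (Suc k)) - int (HF_S n k) \<le> \<mu>"
      "\<mu> \<le> int (HF_S n (Suc k)) - int (beta_offset n (Suc k))"
  shows "\<exists>G. G \<subseteq> monoms n (Suc k) \<and> finite G \<and> int (card G) = \<mu> \<and> minimal_gens G
           \<and> artinian n G \<and> fails_WLP_surj TYPE('k::field_char_0) n G k"
proof -
  define s where "s = nat (int (HF_S n (Suc k)) - \<mu>)"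
  have s: "beta_offset n (Suc k) \<le> s" "s \<le> HF_S n k" "int (HF_S n (Suc k) - s) = \<mu>"
    using \<mu> HF_S_le_HF_S_Suc[OF n k] by (auto simp: s_def of_nat_diff)
  then have "\<not> (n = 3 \<and> k = 1)"
    using beta_offset_le_iff[OF n k] by linarith
  then obtain c :: "monom \<Rightarrow> 'k" and m0 where c: "vanishes_on_ell_multiples n k c" "c m0 \<noteq> 0"
      "\<And>m. c m \<noteq> 0 \<Longrightarrow> m \<in> monoms n (Suc k) \<and> (\<forall>i<n. m \<noteq> pure_power i (Suc k))"
      "card {m. c m \<noteq> 0} \<le> beta_offset n (Suc k)"
    by (rule exists_vanishing_form[OF n k]) blast
  have "card {m. c m \<noteq> 0} \<le> s"
    using c(4) s(1) by simp
  then obtain G where "G \<subseteq> monoms n (Suc k)" "finite G" "card G = HF_S n (Suc k) - s"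
      "minimal_gens G" "artinian n G" "fails_WLP_surj TYPE('k) n G k"
    using exists_truncation_failing_WLP_surj[OF n k c(1-3) _ s(2)] by blast
  then show ?thesis
    using s(3) by (intro exI[of _ G]) simp
qed

theorem corollary4p2:
  fixes n d :: nat
  assumes "n \<ge> 3" and "d \<ge> 2"
  shows "(\<forall>\<mu>::int. int (HF_S n d) - int (HF_S n (d - 1)) \<le> \<mu> \<and> \<mu> \<le> beta n d \<longrightarrow>
            (\<exists>G. G \<subseteq> monoms n d \<and> finite G \<and> int (card G) = \<mu> \<and> minimal_gens G
                 \<and> artinian n G \<and> fails_WLP_surj TYPE('k::field_char_0) n G (d - 1)))
       \<and> ((int (HF_S n d) - int (HF_S n (d - 1)) \<le> beta n d) \<longleftrightarrow> \<not> (n = 3 \<and> d = 2))"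
proof -
  define k where "k = d - 1"
  have d: "d = Suc k" "k \<ge> 1"
    using assms(2) by (auto simp: k_def)
  have beta: "beta n d = int (HF_S n d) - int (beta_offset n d)"
    using assms(2) by (rule beta_eq_HF_S_minus_offset)
  have "\<exists>G. G \<subseteq> monoms n d \<and> finite G \<and> int (card G) = \<mu> \<and> minimal_gens G
          \<and> artinian n G \<and> fails_WLP_surj TYPE('k) n G (d - 1)"
    if "int (HF_S n d) - int (HF_S n (d - 1)) \<le> \<mu>" "\<mu> \<le> beta n d" for \<mu> :: int
    using exists_ideal_failing_WLP_surj[OF assms(1) d(2), of \<mu>] that beta by (simp add: d(1))
  moreover have "(int (HF_S n d) - int (HF_S n (d - 1)) \<le> beta n d) \<longleftrightarrow> \<not> (n = 3 \<and> d = 2)"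
    using beta beta_offset_le_iff[OF assms(1) d(2)] d by auto
  ultimately show ?thesis
    by blast
qed

end
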